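(* Let $M_0$ be a matroid on a finite set $E$ and let $\mathcal{C}_0$ be the family of all non-spanning circuits of $M_0$. Then the free elevation of $M_0$ is a maximal $\mathcal{C}_0$-matroid on $E$. That is, it is a $\mathcal{C}_0$-matroid, and no $\mathcal{C}_0$-matroid on $E$ is strictly larger in the weak order.
   Context: A $\mathcal{C}$-matroid on $E$ is a matroid on $E$ in which every member of $\mathcal{C}$ is a circuit. The weak order is defined by $M_1\preceq M_2$ if every independent set of $M_1$ is independent in $M_2$. $M$ is the truncation of $N$ if $r_N(E)=r_M(E)+1$ and $r_M(X)=\min\{r_N(X),r_M(E)\}$ for all $X$. An erection of $M$ is any such $N$, or $M$ itself (the trivial erection). The free erection is the maximum of the lattice of erections of $M$ under the weak order. The free elevation of $M_0$ is obtained by repeatedly taking non-trivial free erections until a matroid with no non-trivial erection is reached. *)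

theory Defs
  imports Main
begin

definition matroid :: "'a set \<Rightarrow> 'a set set \<Rightarrow> bool" where
  "matroid E I \<longleftrightarrow> finite E \<and> I \<subseteq> Pow E \<and> {} \<in> I
     \<and> (\<forall>X Y. Y \<in> I \<longrightarrow> X \<subseteq> Y \<longrightarrow> X \<in> I)
     \<and> (\<forall>X Y. X \<in> I \<longrightarrow> Y \<in> I \<longrightarrow> card X < card Y \<longrightarrow> (\<exists>y\<in>Y - X. insert y X \<in> I))"

definition rank :: "'a set set \<Rightarrow> 'a set \<Rightarrow> nat" where
  "rank I X = Max (card ` {Y \<in> I. Y \<subseteq> X})"

definition circuit :: "'a set \<Rightarrow> 'a set set \<Rightarrow> 'a set \<Rightarrow> bool" where
  "circuit E I C \<longleftrightarrow> C \<subseteq> E \<and> C \<notin> I \<and> (\<forall>D. D \<subset> C \<longrightarrow> D \<in> I)"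

definition C_matroid :: "'a set \<Rightarrow> 'a set set \<Rightarrow> 'a set set \<Rightarrow> bool" where
  "C_matroid E \<C> I \<longleftrightarrow> matroid E I \<and> (\<forall>C\<in>\<C>. circuit E I C)"

text \<open>Weak order: M1 \<preceq> M2 iff every independent set of M1 is independent in M2,
  i.e. inclusion of the families of independent sets.\<close>

definition is_truncation :: "'a set \<Rightarrow> 'a set set \<Rightarrow> 'a set set \<Rightarrow> bool" where
  "is_truncation E M N \<longleftrightarrow> matroid E M \<and> matroid E N \<and> rank N E = rank M E + 1
     \<and> (\<forall>X. X \<subseteq> E \<longrightarrow> rank M X = min (rank N X) (rank M E))"

definition is_erection :: "'a set \<Rightarrow> 'a set set \<Rightarrow> 'a set set \<Rightarrow> bool" where
  "is_erection E M N \<longleftrightarrow> is_truncation E M N \<or> N = M"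

definition free_erection :: "'a set \<Rightarrow> 'a set set \<Rightarrow> 'a set set" where
  "free_erection E M = (THE N. is_erection E M N \<and> (\<forall>N'. is_erection E M N' \<longrightarrow> N' \<subseteq> N))"

primrec erection_seq :: "'a set \<Rightarrow> 'a set set \<Rightarrow> nat \<Rightarrow> 'a set set" where
  "erection_seq E M0 0 = M0"
| "erection_seq E M0 (Suc n) = free_erection E (erection_seq E M0 n)"

definition free_elevation :: "'a set \<Rightarrow> 'a set set \<Rightarrow> 'a set set" where
  "free_elevation E M0 =
     erection_seq E M0 (LEAST n. \<not> (\<exists>N. is_truncation E (erection_seq E M0 n) N))"

end

theory Submission
  imports Defs
begin

(* A non-trivial erection N of a matroid M of rank r is exactly a matroid of rank r + 1 with
  M = {X \<in> N. |X| \<le> r}. So a non-spanning circuit C of M0, i.e. one with |C| \<le> r(M0), stays a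
  circuit in every erection, hence in every term of the free-erection sequence.
  Conversely let N be a C0-matroid strictly above the free elevation F. A set of N of size at
  most r(M0) that is dependent in M0 would contain a non-spanning circuit of M0, so M0 is the
  truncation of N to rank r(M0). If a term M of the sequence is the truncation of N to its rank
  r, then the truncation of N to rank r + 1 is an erection of M, so it lies below the free
  erection of M, which in turn lies inside N; hence the next term is again a truncation of N.
  Thus F is a truncation of N, and since F \<noteq> N the truncation of N one rank higher is a
  non-trivial erection of F, which the free elevation does not have. *)

definition trunc :: "nat \<Rightarrow> 'a set set \<Rightarrow> 'a set set" where
  "trunc r N = {X \<in> N. card X \<le> r}"

lemma matroid_finite: "matroid E I \<Longrightarrow> finite E"
  unfolding matroid_def by blast

lemma matroid_indep_subset: "matroid E I \<Longrightarrow> X \<in> I \<Longrightarrow> X \<subseteq> E"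
  unfolding matroid_def by blast

lemma matroid_empty_indep: "matroid E I \<Longrightarrow> {} \<in> I"
  unfolding matroid_def by blast

lemma matroid_subset_indep: "matroid E I \<Longrightarrow> Y \<in> I \<Longrightarrow> X \<subseteq> Y \<Longrightarrow> X \<in> I"
  unfolding matroid_def by blast

lemma matroid_augment:
  "matroid E I \<Longrightarrow> X \<in> I \<Longrightarrow> Y \<in> I \<Longrightarrow> card X < card Y \<Longrightarrow> \<exists>y \<in> Y - X. insert y X \<in> I"
  unfolding matroid_def by blast

lemma matroid_finite_indeps: "matroid E I \<Longrightarrow> finite I"
  unfolding matroid_def by (meson finite_Pow_iff finite_subset)

lemma matroid_finite_indep: "matroid E I \<Longrightarrow> X \<in> I \<Longrightarrow> finite X"
  using matroid_finite matroid_indep_subset finite_subset by metis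

lemma card_le_rank: "matroid E I \<Longrightarrow> Y \<in> I \<Longrightarrow> Y \<subseteq> X \<Longrightarrow> card Y \<le> rank I X"
  unfolding rank_def by (rule Max_ge) (auto simp: matroid_finite_indeps)

lemma card_le_rank_ground: "matroid E I \<Longrightarrow> X \<in> I \<Longrightarrow> card X \<le> rank I E"
  using card_le_rank matroid_indep_subset by blast

lemma rank_attained:
  assumes "matroid E I"
  obtains Y where "Y \<in> I" "Y \<subseteq> X" "card Y = rank I X"
proof -
  have "rank I X \<in> card ` {Y \<in> I. Y \<subseteq> X}"
    unfolding rank_def
    by (rule Max_in) (use matroid_finite_indeps[OF assms] matroid_empty_indep[OF assms] in auto)
  then show thesis using that by force
qed

lemma rank_le_card: "matroid E I \<Longrightarrow> finite X \<Longrightarrow> rank I X \<le> card X"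
  by (metis card_mono rank_attained)

lemma indep_iff_rank_eq_card:
  assumes "matroid E I" "X \<subseteq> E"
  shows "X \<in> I \<longleftrightarrow> rank I X = card X"
proof -
  have "finite X" using assms matroid_finite finite_subset by blast
  moreover obtain Y where "Y \<in> I" "Y \<subseteq> X" "card Y = rank I X"
    using rank_attained[OF assms(1)] .
  ultimately show ?thesis
    using card_le_rank[OF assms(1)] rank_le_card[OF assms(1)] card_subset_eq
    by (metis dual_order.refl le_antisym)
qed

lemma rank_ground_eqI:
  assumes "matroid E I" "\<forall>X \<in> I. card X \<le> k" "Y \<in> I" "card Y = k"
  shows "rank I E = k"
  by (metis assms card_le_rank_ground le_antisym rank_attained)

lemma circuit_rank:
  assumes M: "matroid E M" and C: "circuit E M C"
  shows "rank M C + 1 = card C"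
proof -
  have "C \<subseteq> E" "C \<notin> M" and proper_indep: "\<And>D. D \<subset> C \<Longrightarrow> D \<in> M"
    using C unfolding circuit_def by blast+
  have "finite C"
    using finite_subset[OF \<open>C \<subseteq> E\<close> matroid_finite[OF M]] .
  have "C \<noteq> {}"
    using \<open>C \<notin> M\<close> matroid_empty_indep[OF M] by blast
  then obtain x where "x \<in> C" by blast
  then have "card C \<le> rank M C + 1"
    using card_le_rank[OF M proper_indep, of "C - {x}"] \<open>finite C\<close> by fastforce
  moreover have "rank M C < card C"
    using indep_iff_rank_eq_card[OF M \<open>C \<subseteq> E\<close>] rank_le_card[OF M \<open>finite C\<close>] \<open>C \<notin> M\<close>
    by simp
  ultimately show ?thesis by linarith
qed

lemma circuit_rank_less_iff:
  assumes "matroid E M" "circuit E M C"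
  shows "rank M C < rank M E \<longleftrightarrow> card C \<le> rank M E"
  using circuit_rank[OF assms] by linarith

lemma dependent_contains_circuit:
  assumes M: "matroid E M" and "X \<subseteq> E" "X \<notin> M"
  obtains C where "C \<subseteq> X" "circuit E M C"
proof -
  let ?D = "{Y. Y \<subseteq> X \<and> Y \<notin> M}"
  have "finite X"
    using finite_subset[OF \<open>X \<subseteq> E\<close> matroid_finite[OF M]] .
  moreover have "?D \<subseteq> Pow X" by blast
  ultimately have "finite ?D"
    by (metis finite_Pow_iff finite_subset)
  moreover have "X \<in> ?D" using \<open>X \<notin> M\<close> by blast
  ultimately obtain C where C: "C \<in> ?D" and minimal: "\<forall>D \<in> ?D. D \<le> C \<longrightarrow> C = D"
    using finite_has_minimal2[of ?D X] by blast
  have "D \<in> M" if "D \<subset> C" for D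
    using minimal C that by blast
  then have "circuit E M C"
    unfolding circuit_def using C \<open>X \<subseteq> E\<close> by blast
  with C that show thesis by blast
qed

lemma trunc_subset: "trunc r N \<subseteq> N"
  unfolding trunc_def by blast

lemma trunc_trunc: "j \<le> k \<Longrightarrow> trunc j (trunc k N) = trunc j N"
  unfolding trunc_def by auto

lemma eq_truncD: "M = trunc r N \<Longrightarrow> X \<in> M \<longleftrightarrow> X \<in> N \<and> card X \<le> r"
  unfolding trunc_def by blast

lemma trunc_matroid:
  assumes N: "matroid E N"
  shows "matroid E (trunc r N)"
  unfolding matroid_def
proof (intro conjI allI impI)
  show "finite E"
    using matroid_finite[OF N] .
  show "trunc r N \<subseteq> Pow E"
    using matroid_indep_subset[OF N] trunc_subset by blast
  show "{} \<in> trunc r N"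
    using matroid_empty_indep[OF N] unfolding trunc_def by simp
next
  fix X Y
  assume "Y \<in> trunc r N" "X \<subseteq> Y"
  then have "Y \<in> N" "card Y \<le> r"
    unfolding trunc_def by auto
  then show "X \<in> trunc r N"
    unfolding trunc_def
    using matroid_subset_indep[OF N \<open>Y \<in> N\<close> \<open>X \<subseteq> Y\<close>]
      card_mono[OF matroid_finite_indep[OF N \<open>Y \<in> N\<close>] \<open>X \<subseteq> Y\<close>]
    by simp
next
  fix X Y
  assume "X \<in> trunc r N" "Y \<in> trunc r N" "card X < card Y"
  then have "X \<in> N" "Y \<in> N" "card Y \<le> r"
    unfolding trunc_def by auto
  then obtain y where "y \<in> Y - X" "insert y X \<in> N"
    using matroid_augment[OF N] \<open>card X < card Y\<close> by blast
  moreover have "card (insert y X) = card X + 1"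
    using \<open>y \<in> Y - X\<close> matroid_finite_indep[OF N \<open>X \<in> N\<close>] by simp
  ultimately show "\<exists>y \<in> Y - X. insert y X \<in> trunc r N"
    using \<open>card X < card Y\<close> \<open>card Y \<le> r\<close> unfolding trunc_def by auto
qed

lemma is_truncation_iff:
  "is_truncation E M N \<longleftrightarrow> matroid E N \<and> rank N E = rank M E + 1 \<and> M = trunc (rank M E) N"
proof
  assume trunc: "is_truncation E M N"
  then have M: "matroid E M" and N: "matroid E N"
    and rank_M: "\<And>X. X \<subseteq> E \<Longrightarrow> rank M X = min (rank N X) (rank M E)"
    unfolding is_truncation_def by blast+
  have "X \<in> M \<longleftrightarrow> X \<in> trunc (rank M E) N" for X
  proof (cases "X \<subseteq> E")
    case True
    have "rank N X \<le> card X"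
      using rank_le_card[OF N finite_subset[OF True matroid_finite[OF N]]] .
    then have "min (rank N X) (rank M E) = card X \<longleftrightarrow> rank N X = card X \<and> card X \<le> rank M E"
      by (auto simp: min_def)
    then show ?thesis
      unfolding trunc_def
      using rank_M[OF True] indep_iff_rank_eq_card[OF M True] indep_iff_rank_eq_card[OF N True]
      by simp
  next
    case False
    then show ?thesis
      using matroid_indep_subset[OF M] matroid_indep_subset[OF N] trunc_subset by blast
  qed
  then have "M = trunc (rank M E) N"
    by (rule set_eqI)
  with trunc show "matroid E N \<and> rank N E = rank M E + 1 \<and> M = trunc (rank M E) N"
    unfolding is_truncation_def by blast
next
  assume "matroid E N \<and> rank N E = rank M E + 1 \<and> M = trunc (rank M E) N"
  then have N: "matroid E N" and rank_N: "rank N E = rank M E + 1"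
    and M_eq: "M = trunc (rank M E) N"
    by blast+
  from trunc_matroid[OF N, of "rank M E"] have M: "matroid E M"
    unfolding M_eq[symmetric] .
  have "rank M X = min (rank N X) (rank M E)" for X
  proof (rule antisym)
    obtain Y where Y: "Y \<in> M" "Y \<subseteq> X" "card Y = rank M X"
      using rank_attained[OF M] .
    then have "Y \<in> N" "card Y \<le> rank M E"
      using eq_truncD[OF M_eq] by auto
    then show "rank M X \<le> min (rank N X) (rank M E)"
      using card_le_rank[OF N \<open>Y \<in> N\<close> \<open>Y \<subseteq> X\<close>] Y(3) by simp
  next
    obtain Z where Z: "Z \<in> N" "Z \<subseteq> X" "card Z = rank N X"
      using rank_attained[OF N] .
    obtain Z' where Z': "Z' \<subseteq> Z" "card Z' = min (card Z) (rank M E)"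
      using obtain_subset_with_card_n[of "min (card Z) (rank M E)" Z] by auto
    then have "Z' \<in> M"
      using eq_truncD[OF M_eq] matroid_subset_indep[OF N Z(1)] by simp
    then have "card Z' \<le> rank M X"
      using card_le_rank[OF M] Z'(1) Z(2) by blast
    then show "min (rank N X) (rank M E) \<le> rank M X"
      using Z(3) Z'(2) by simp
  qed
  with M N rank_N show "is_truncation E M N"
    unfolding is_truncation_def by blast
qed

lemma is_truncationD:
  assumes "is_truncation E M N"
  shows "matroid E N" "rank N E = rank M E + 1" "M = trunc (rank M E) N"
  using assms unfolding is_truncation_iff by blast+

lemma is_truncation_card_le: "is_truncation E M N \<Longrightarrow> X \<in> N \<Longrightarrow> card X \<le> rank M E + 1"
  using is_truncationD card_le_rank_ground by metis

lemma is_truncation_trunc_Suc: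
  assumes N: "matroid E N" and M_eq: "M = trunc (rank M E) N" and "M \<subset> N"
  shows "is_truncation E M (trunc (rank M E + 1) N)"
proof -
  obtain Y where "Y \<in> N" "rank M E < card Y"
    using \<open>M \<subset> N\<close> eq_truncD[OF M_eq] by force
  then obtain Y' where "Y' \<subseteq> Y" "card Y' = rank M E + 1"
    using obtain_subset_with_card_n[of "rank M E + 1" Y] by auto
  then have "Y' \<in> trunc (rank M E + 1) N"
    unfolding trunc_def using matroid_subset_indep[OF N \<open>Y \<in> N\<close>] by simp
  then have "rank (trunc (rank M E + 1) N) E = rank M E + 1"
    using rank_ground_eqI[OF trunc_matroid[OF N]] \<open>card Y' = rank M E + 1\<close>
    unfolding trunc_def by blast
  moreover have "M = trunc (rank M E) (trunc (rank M E + 1) N)"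
    using M_eq trunc_trunc[of "rank M E" "rank M E + 1" N] by simp
  ultimately show ?thesis
    unfolding is_truncation_iff using trunc_matroid[OF N] by blast
qed

lemma circuit_is_truncation:
  assumes "is_truncation E M N" "circuit E M C" "card C \<le> rank M E"
  shows "circuit E N C"
  using assms eq_truncD[OF is_truncationD(3)[OF assms(1)]] unfolding circuit_def by blast

lemma matroid_Un_of_trunc_eq:
  assumes N1: "matroid E N1" and N2: "matroid E N2"
    and card_le: "\<forall>X \<in> N1 \<union> N2. card X \<le> r + 1" and "trunc r N1 = trunc r N2"
  shows "matroid E (N1 \<union> N2)"
  unfolding matroid_def
proof (intro conjI allI impI)
  show "finite E" "N1 \<union> N2 \<subseteq> Pow E" "{} \<in> N1 \<union> N2"
    using N1 N2 matroid_finite matroid_indep_subset matroid_empty_indep by blast+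
  fix X Y
  show "Y \<in> N1 \<union> N2 \<Longrightarrow> X \<subseteq> Y \<Longrightarrow> X \<in> N1 \<union> N2"
    using N1 N2 matroid_subset_indep by blast
  assume X: "X \<in> N1 \<union> N2" and Y: "Y \<in> N1 \<union> N2" and "card X < card Y"
  have "card Y \<le> r + 1" using card_le Y by blast
  then have "card X \<le> r" using \<open>card X < card Y\<close> by linarith
  then have "X \<in> trunc r N1 \<and> X \<in> trunc r N2"
    using X \<open>trunc r N1 = trunc r N2\<close> unfolding trunc_def by blast
  then have "X \<in> N1" "X \<in> N2" using trunc_subset by blast+
  then show "\<exists>y \<in> Y - X. insert y X \<in> N1 \<union> N2"
    using Y \<open>card X < card Y\<close> matroid_augment[OF N1] matroid_augment[OF N2] by blast
qed

lemma is_erection_matroid: "matroid E M \<Longrightarrow> is_erection E M N \<Longrightarrow> matroid E N"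
  unfolding is_erection_def using is_truncationD(1) by blast

lemma is_erection_subset: "is_erection E M N \<Longrightarrow> M \<subseteq> N"
  unfolding is_erection_def using is_truncationD(3) trunc_subset by blast

lemma is_erection_Un:
  assumes "is_erection E M N1" "is_erection E M N2"
  shows "is_erection E M (N1 \<union> N2)"
proof (cases "N1 = M \<or> N2 = M")
  case True
  then show ?thesis
    using assms is_erection_subset by (metis sup.absorb1 sup.absorb2)
next
  case False
  then have T1: "is_truncation E M N1" and T2: "is_truncation E M N2"
    using assms unfolding is_erection_def by auto
  note T1D = is_truncationD[OF T1] and T2D = is_truncationD[OF T2]
  have card_le: "\<forall>X \<in> N1 \<union> N2. card X \<le> rank M E + 1"
    using is_truncation_card_le T1 T2 by blast
  have Un: "matroid E (N1 \<union> N2)"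
    using matroid_Un_of_trunc_eq[OF T1D(1) T2D(1) card_le] T1D(3) T2D(3) by simp
  obtain Y where "Y \<in> N1" "card Y = rank N1 E"
    using rank_attained[OF T1D(1)] by blast
  then have "rank (N1 \<union> N2) E = rank M E + 1"
    using rank_ground_eqI[OF Un card_le, of Y] T1D(2) by simp
  moreover have "M = trunc (rank M E) (N1 \<union> N2)"
    using T1D(3) T2D(3) unfolding trunc_def by blast
  ultimately show ?thesis
    unfolding is_erection_def is_truncation_iff using Un by blast
qed

lemma free_erection_greatest:
  assumes M: "matroid E M"
  shows "is_erection E M (free_erection E M) \<and> (\<forall>N. is_erection E M N \<longrightarrow> N \<subseteq> free_erection E M)"
proof -
  let ?Erections = "{N. is_erection E M N}"
  have "?Erections \<subseteq> Pow (Pow E)"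
    using is_erection_matroid[OF M] matroid_indep_subset by blast
  then have "finite ?Erections"
    using matroid_finite[OF M] finite_subset by blast
  moreover have "?Erections \<noteq> {}"
    unfolding is_erection_def by blast
  ultimately obtain F where F: "is_erection E M F"
    and maximal: "\<And>N. is_erection E M N \<Longrightarrow> F \<subseteq> N \<Longrightarrow> F = N"
    using finite_has_maximal[of ?Erections] by blast
  have "N \<subseteq> F" if "is_erection E M N" for N
    using maximal[OF is_erection_Un[OF F that]] by blast
  with F have "is_erection E M F \<and> (\<forall>N. is_erection E M N \<longrightarrow> N \<subseteq> F)"
    by blast
  then have "\<exists>!F. is_erection E M F \<and> (\<forall>N. is_erection E M N \<longrightarrow> N \<subseteq> F)"
    by blast
  then show ?thesis
    unfolding free_erection_def by (rule theI')
qed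

lemma is_erection_free_erection: "matroid E M \<Longrightarrow> is_erection E M (free_erection E M)"
  using free_erection_greatest by blast

lemma is_erection_le_free_erection:
  "matroid E M \<Longrightarrow> is_erection E M N \<Longrightarrow> N \<subseteq> free_erection E M"
  using free_erection_greatest by blast

lemma is_truncation_free_erection:
  assumes M: "matroid E M" and "is_truncation E M N"
  shows "is_truncation E M (free_erection E M)"
proof (rule ccontr)
  assume "\<not> is_truncation E M (free_erection E M)"
  then have "N \<subseteq> M"
    using assms is_erection_free_erection[OF M] is_erection_le_free_erection[OF M]
    unfolding is_erection_def by metis
  moreover obtain Y where "Y \<in> N" "card Y = rank N E"
    using rank_attained[OF is_truncationD(1)[OF assms(2)]] by blast
  ultimately show False
    using card_le_rank_ground[OF M] is_truncationD(2)[OF assms(2)] by fastforce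
qed

lemma free_erection_eq_trunc:
  assumes N: "matroid E N" and M_eq: "M = trunc (rank M E) N" and "free_erection E M \<subseteq> N"
  shows "free_erection E M = trunc (rank (free_erection E M) E) N"
proof -
  let ?F = "free_erection E M"
  have M: "matroid E M" using trunc_matroid[OF N] M_eq by metis
  show ?thesis
  proof (cases "?F = M")
    case True
    then show ?thesis using M_eq by simp
  next
    case False
    then have T: "is_truncation E M ?F"
      using is_erection_free_erection[OF M] unfolding is_erection_def by blast
    then have "M \<subset> N"
      using False is_erection_subset[OF is_erection_free_erection[OF M]] \<open>?F \<subseteq> N\<close> by blast
    then have "is_truncation E M (trunc (rank M E + 1) N)"
      by (rule is_truncation_trunc_Suc[OF N M_eq])
    then have "trunc (rank M E + 1) N \<subseteq> ?F"
      using is_erection_le_free_erection[OF M] unfolding is_erection_def by blast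
    moreover have "?F \<subseteq> trunc (rank M E + 1) N"
      using \<open>?F \<subseteq> N\<close> is_truncation_card_le[OF T] unfolding trunc_def by blast
    ultimately show ?thesis
      using is_truncationD(2)[OF T] by simp
  qed
qed

lemma erection_seq_matroid: "matroid E M0 \<Longrightarrow> matroid E (erection_seq E M0 n)"
  by (induction n) (auto intro: is_erection_matroid is_erection_free_erection)

lemma erection_seq_mono:
  assumes "matroid E M0" "i \<le> j"
  shows "erection_seq E M0 i \<subseteq> erection_seq E M0 j"
proof -
  have "erection_seq E M0 n \<subseteq> erection_seq E M0 (Suc n)" for n
    using is_erection_subset[OF is_erection_free_erection[OF erection_seq_matroid[OF assms(1)]]]
    by simp
  then show ?thesis
    using lift_Suc_mono_le[of "erection_seq E M0"] assms(2) by blast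
qed

lemma ex_erection_seq_no_truncation:
  assumes M0: "matroid E M0"
  shows "\<exists>n. \<nexists>N. is_truncation E (erection_seq E M0 n) N"
proof (rule ccontr)
  assume "\<nexists>n. \<nexists>N. is_truncation E (erection_seq E M0 n) N"
  then have step: "is_truncation E (erection_seq E M0 n) (erection_seq E M0 (Suc n))" for n
    using is_truncation_free_erection[OF erection_seq_matroid[OF M0]] by auto
  have "rank (erection_seq E M0 n) E = rank M0 E + n" for n
    by (induction n) (simp_all add: is_truncationD(2)[OF step, simplified])
  moreover have "rank (erection_seq E M0 (Suc (card E))) E \<le> card E"
    using rank_le_card[OF erection_seq_matroid[OF M0] matroid_finite[OF M0]] .
  ultimately have "rank M0 E + Suc (card E) \<le> card E" by metis
  then show False by simp
qed

lemma free_elevation_no_truncation: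
  "matroid E M0 \<Longrightarrow> \<nexists>N. is_truncation E (free_elevation E M0) N"
  unfolding free_elevation_def by (rule LeastI_ex[OF ex_erection_seq_no_truncation])

lemma circuit_erection_seq:
  assumes M0: "matroid E M0" and "circuit E M0 C" "card C \<le> rank M0 E"
  shows "circuit E (erection_seq E M0 n) C \<and> card C \<le> rank (erection_seq E M0 n) E"
proof (induction n)
  case 0
  then show ?case using assms by simp
next
  case (Suc n)
  let ?M = "erection_seq E M0 n"
  have "free_erection E ?M = ?M \<or> is_truncation E ?M (free_erection E ?M)"
    using is_erection_free_erection[OF erection_seq_matroid[OF M0]]
    unfolding is_erection_def by blast
  then show ?case
    using Suc circuit_is_truncation is_truncationD(2) by fastforce
qed

lemma eq_trunc_of_nonspanning_circuits:
  assumes M0: "matroid E M0" and N: "matroid E N" and "M0 \<subseteq> N"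
    and dependent: "\<And>C. circuit E M0 C \<Longrightarrow> card C \<le> rank M0 E \<Longrightarrow> C \<notin> N"
  shows "M0 = trunc (rank M0 E) N"
proof -
  have "X \<in> M0" if "X \<in> N" "card X \<le> rank M0 E" for X
  proof (rule ccontr)
    assume "X \<notin> M0"
    then obtain C where "C \<subseteq> X" "circuit E M0 C"
      using dependent_contains_circuit[OF M0 matroid_indep_subset[OF N \<open>X \<in> N\<close>]] by blast
    moreover have "card C \<le> card X"
      using \<open>C \<subseteq> X\<close> card_mono matroid_finite_indep[OF N \<open>X \<in> N\<close>] by blast
    ultimately show False
      using dependent matroid_subset_indep[OF N \<open>X \<in> N\<close>] that(2) by fastforce
  qed
  then show ?thesis
    using \<open>M0 \<subseteq> N\<close> card_le_rank_ground[OF M0] unfolding trunc_def by blast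
qed

lemma erection_seq_eq_trunc:
  assumes N: "matroid E N" and M0_eq: "M0 = trunc (rank M0 E) N"
    and "erection_seq E M0 n \<subseteq> N"
  shows "erection_seq E M0 n = trunc (rank (erection_seq E M0 n) E) N"
  using assms(3)
proof (induction n)
  case 0
  then show ?case using M0_eq by simp
next
  case (Suc n)
  have M0: "matroid E M0" using trunc_matroid[OF N] M0_eq by metis
  then have "erection_seq E M0 n \<subseteq> N"
    using Suc.prems erection_seq_mono[of E M0 n "Suc n"] by simp
  then show ?case
    using Suc free_erection_eq_trunc[OF N] by simp
qed

theorem lemma3p1:
  fixes E :: "'a set" and M0 :: "'a set set"
  assumes "matroid E M0"
  defines "\<C>0 \<equiv> {C. circuit E M0 C \<and> rank M0 C < rank M0 E}"
  shows "C_matroid E \<C>0 (free_elevation E M0)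
    \<and> \<not> (\<exists>N. C_matroid E \<C>0 N \<and> free_elevation E M0 \<subset> N)"
proof -
  note M0 = \<open>matroid E M0\<close>
  obtain n where F: "free_elevation E M0 = erection_seq E M0 n"
    unfolding free_elevation_def by blast
  have C0: "\<C>0 = {C. circuit E M0 C \<and> card C \<le> rank M0 E}"
    unfolding \<C>0_def using circuit_rank_less_iff[OF M0] by blast
  have "C_matroid E \<C>0 (free_elevation E M0)"
    unfolding C_matroid_def C0 F using erection_seq_matroid[OF M0] circuit_erection_seq[OF M0] by blast
  moreover have False if "C_matroid E \<C>0 N" and "free_elevation E M0 \<subset> N" for N
  proof -
    have N: "matroid E N" and "\<forall>C \<in> \<C>0. C \<notin> N"
      using that(1) unfolding C_matroid_def circuit_def by blast+
    moreover have "M0 \<subseteq> N"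
      using erection_seq_mono[OF M0, of 0 n] that(2) F by auto
    ultimately have "M0 = trunc (rank M0 E) N"
      using eq_trunc_of_nonspanning_circuits[OF M0] unfolding C0 by blast
    then have "free_elevation E M0 = trunc (rank (free_elevation E M0) E) N"
      using erection_seq_eq_trunc[OF N] that(2) F by auto
    then show False
      using is_truncation_trunc_Suc[OF N] that(2) free_elevation_no_truncation[OF M0] by blast
  qed
  ultimately show ?thesis by blast
qed

end
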